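(* A matrix $A\in\mathcal{B}$ lies in $\ker\overline{\phi}$ if and only if $A=\beta(\Delta)^k$ for some $k\in\mathbb{Z}$, where $\Delta=(\sigma_1\sigma_2\sigma_1)^2$.
   Context: Let $B_3$ be the braid group with standard generators $\sigma_1,\sigma_2$ and $\beta$ the Burau representation $\beta(\sigma_1)=\begin{pmatrix}1-t&t&0\\1&0&0\\0&0&1\end{pmatrix}$, $\beta(\sigma_2)=\begin{pmatrix}1&0&0\\0&1-t&t\\0&1&0\end{pmatrix}$. For a matrix $A$ with Laurent polynomial entries, $\overline{A}$ denotes substitution $t\mapsto t^{-1}$ in every entry. Let $J_3=\begin{pmatrix}1&-t^{-1}&-t^{-1}\\-t&1&-t^{-1}\\-t&-t&1\end{pmatrix}$, $v=(t,t^2,t^3)$ (a row vector), $\vec{1}=(1,1,1)^T$, and $\mathcal{B}=\{A\in\mathrm{GL}(3,\mathbb{Z}[t,t^{-1}]) : vA=v,\ A\vec 1=\vec 1,\ \overline{A}J_3A^T=J_3\}$. For $A=(A_{ij})\in\mathcal{B}$ put, for $k=1,2$, $f_{k1}=A_{k1}(1+t+t^2)-1$, $f_{k2}=A_{k1}+A_{k2}(1+t)-1$, $g_{kl}=f_{kl}/(t(1+t))$, and $\phi(A)=\begin{pmatrix}g_{11}&g_{12}\\ t^{-1}g_{11}+(1+t)g_{21}& t^{-1}g_{12}+(1+t)g_{22}\end{pmatrix}$. Let $\overline{\phi}=\pi\circ\phi$ with $\pi:\mathrm{GL}(2,\mathbb{Q}(t))\to\mathrm{PGL}(2,\mathbb{Q}(t))$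 the projection. *)

theory Defs
  imports "HOL-Analysis.Analysis" "HOL-Computational_Algebra.Polynomial_Factorial"
begin

text \<open>The field Q(t) is modelled as the fraction field of rat poly.
  Laurent polynomials Z[t,t^-1] are the subring of elements p(t)/t^n with p an integer polynomial.\<close>

type_synonym qt = "rat poly fract"

definition tt :: qt where "tt = to_fract [:0, 1:]"

definition laurent :: "qt \<Rightarrow> bool" where
  "laurent x \<longleftrightarrow> (\<exists>(p::int poly) (n::nat). x = to_fract (map_poly of_int p) / tt ^ n)"

definition subst_inv_poly :: "rat poly \<Rightarrow> qt" where
  "subst_inv_poly p = poly (map_poly (\<lambda>c. to_fract [:c:]) p) (inverse tt)"

definition tbar :: "qt \<Rightarrow> qt" where
  "tbar x = (SOME y. \<exists>p q. q \<noteq> 0 \<and> x = to_fract p / to_fract q \<and>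
                        y = subst_inv_poly p / subst_inv_poly q)"

definition mbar :: "qt^'n^'m \<Rightarrow> qt^'n^'m" where
  "mbar A = (\<chi> i j. tbar (A $ i $ j))"

definition laurent_mat :: "qt^'n^'m \<Rightarrow> bool" where
  "laurent_mat A \<longleftrightarrow> (\<forall>i j. laurent (A $ i $ j))"

definition GL3L :: "(qt^3^3) set" where
  "GL3L = {A. laurent_mat A \<and> (\<exists>B::qt^3^3. laurent_mat B \<and> A ** B = mat 1 \<and> B ** A = mat 1)}"

definition J3 :: "qt^3^3" where
  "J3 = vector [vector [1, - inverse tt, - inverse tt],
                vector [- tt, 1, - inverse tt],
                vector [- tt, - tt, 1]]"

definition vv :: "qt^3" where "vv = vector [tt, tt^2, tt^3]"

definition ones3 :: "qt^3" where "ones3 = (\<chi> i. 1)"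

definition calB :: "(qt^3^3) set" where
  "calB = {A \<in> GL3L. vv v* A = vv \<and> A *v ones3 = ones3 \<and> mbar A ** J3 ** transpose A = J3}"

definition burau1 :: "qt^3^3" where
  "burau1 = vector [vector [1 - tt, tt, 0], vector [1, 0, 0], vector [0, 0, 1]]"

definition burau2 :: "qt^3^3" where
  "burau2 = vector [vector [1, 0, 0], vector [0, 1 - tt, tt], vector [0, 1, 0]]"

definition burauDelta :: "qt^3^3" where
  "burauDelta = (burau1 ** burau2 ** burau1) ** (burau1 ** burau2 ** burau1)"

definition mat_npow :: "'a::semiring_1^'n^'n \<Rightarrow> nat \<Rightarrow> 'a^'n^'n" where
  "mat_npow M n = (((**) M) ^^ n) (mat 1)"

definition mat_zpow :: "'a::semiring_1^'n^'n \<Rightarrow> int \<Rightarrow> 'a^'n^'n" where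
  "mat_zpow M k = (if 0 \<le> k then mat_npow M (nat k) else mat_npow (matrix_inv M) (nat (- k)))"

definition phi :: "qt^3^3 \<Rightarrow> qt^2^2" where
  "phi A = (let
     f11 = A$1$1 * (1 + tt + tt^2) - 1;
     f12 = A$1$1 + A$1$2 * (1 + tt) - 1;
     f21 = A$2$1 * (1 + tt + tt^2) - 1;
     f22 = A$2$1 + A$2$2 * (1 + tt) - 1;
     g11 = f11 / (tt * (1 + tt)); g12 = f12 / (tt * (1 + tt));
     g21 = f21 / (tt * (1 + tt)); g22 = f22 / (tt * (1 + tt))
   in vector [vector [g11, g12],
              vector [inverse tt * g11 + (1 + tt) * g21, inverse tt * g12 + (1 + tt) * g22]])"

text \<open>Kernel of phi-bar = pi o phi: phi A is a nonzero scalar matrix (the identity of PGL(2,Q(t))).\<close>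
definition in_ker_phibar :: "qt^3^3 \<Rightarrow> bool" where
  "in_ker_phibar A \<longleftrightarrow> (\<exists>c::qt. c \<noteq> 0 \<and> phi A = mat c)"

end

theory Submission
  imports Defs
begin

(* If phi A = c I, the conditions vv A = vv and A 1 = 1 force A = c I + (1 - c) P, where P is
   the projection onto the constant vectors along the hyperplane vv x = 0.  These matrices form
   a one-parameter group containing beta(Delta) at c = t^3.  Laurent entries of A and of its
   inverse make c a unit +-t^k of Z[t,t^-1]; the entry (1 - c)/(1 + t + t^2) is a Laurent
   polynomial only if 1 - c vanishes at a primitive cube root of unity, i.e. c = t^(3m). *)

(* For sum w \<noteq> 0 this fixes the all-ones vector and multiplies the hyperplane w x = 0 by c. *)
definition hyperplane_scaling :: "'a::field^'n \<Rightarrow> 'a \<Rightarrow> 'a^'n^'n" where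
  "hyperplane_scaling w c = (\<chi> i j. (if i = j then c else 0) + (1 - c) * w $ j / sum (($) w) UNIV)"

lemma hyperplane_scaling_nth:
  "hyperplane_scaling w c $ i $ j = (if i = j then c else 0) + (1 - c) * w $ j / sum (($) w) UNIV"
  by (simp add: hyperplane_scaling_def)

lemma hyperplane_scaling_1: "hyperplane_scaling w 1 = mat 1"
  by (simp add: hyperplane_scaling_def mat_def vec_eq_iff)

lemma vector_matrix_mult_hyperplane_scaling:
  assumes "sum (($) w) UNIV \<noteq> 0"
  shows "w v* hyperplane_scaling w c = w"
proof -
  have "(\<Sum>i\<in>UNIV. w $ i * hyperplane_scaling w c $ i $ j) = w $ j" for j
    using assms
    by (simp add: hyperplane_scaling_nth distrib_left sum.distrib if_distrib[of "\<lambda>x. _ * x"]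
        flip: sum_distrib_right sum_divide_distrib cong: if_cong) (simp add: field_simps)
  then show ?thesis
    by (simp add: vector_matrix_mult_def vec_eq_iff)
qed

lemma hyperplane_scaling_mult_ones:
  assumes "sum (($) w) UNIV \<noteq> 0"
  shows "hyperplane_scaling w c *v (\<chi> i. 1) = (\<chi> i. 1)"
proof -
  have "(\<Sum>j\<in>UNIV. hyperplane_scaling w c $ i $ j) = 1" for i
    using assms
    by (simp add: hyperplane_scaling_nth sum.distrib flip: sum_divide_distrib sum_distrib_left)
  then show ?thesis
    by (simp add: matrix_vector_mult_def vec_eq_iff)
qed

lemma hyperplane_scaling_mult:
  assumes "sum (($) w) UNIV \<noteq> 0"
  shows "hyperplane_scaling w c ** hyperplane_scaling w d = hyperplane_scaling w (c * d)"
proof -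
  let ?M = "hyperplane_scaling w"
  have "(\<Sum>k\<in>UNIV. ?M c $ i $ k * ?M d $ k $ j)
      = c * ?M d $ i $ j + (1 - c) / sum (($) w) UNIV * (\<Sum>k\<in>UNIV. w $ k * ?M d $ k $ j)" for i j
    by (simp add: hyperplane_scaling_nth[of w c] distrib_right sum.distrib if_distrib[of "\<lambda>x. x * _"]
        sum_distrib_left algebra_simps cong: if_cong)
  also have "\<dots> i j = ?M (c * d) $ i $ j" for i j
    using vector_matrix_mult_hyperplane_scaling[OF assms, of d] assms
    by (simp add: vector_matrix_mult_def vec_eq_iff hyperplane_scaling_nth) (simp add: field_simps)
  finally show ?thesis
    by (simp add: matrix_matrix_mult_def vec_eq_iff)
qed

lemma matrix_inv_eqI:
  fixes A :: "'a::semiring_1^'n^'n"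
  assumes "A ** B = mat 1" and "B ** A = mat 1"
  shows "matrix_inv A = B"
proof -
  have inv: "A ** matrix_inv A = mat 1"
    unfolding matrix_inv_def by (rule someI2[of _ B]) (use assms in auto)
  have "B = (B ** A) ** matrix_inv A"
    using inv by (simp add: matrix_mul_assoc[symmetric])
  then show ?thesis
    using assms(2) by simp
qed

lemma mat_npow_hyperplane_scaling:
  assumes "sum (($) w) UNIV \<noteq> 0"
  shows "mat_npow (hyperplane_scaling w c) n = hyperplane_scaling w (c ^ n)"
  by (induction n) (simp_all add: mat_npow_def hyperplane_scaling_1 hyperplane_scaling_mult[OF assms])

lemma matrix_inv_hyperplane_scaling:
  assumes "sum (($) w) UNIV \<noteq> 0" and "c \<noteq> 0"
  shows "matrix_inv (hyperplane_scaling w c) = hyperplane_scaling w (inverse c)"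
  using assms by (intro matrix_inv_eqI) (simp_all add: hyperplane_scaling_mult hyperplane_scaling_1)

lemma mat_zpow_hyperplane_scaling:
  assumes "sum (($) w) UNIV \<noteq> 0" and "c \<noteq> 0"
  shows "mat_zpow (hyperplane_scaling w c) k = hyperplane_scaling w (c powi k)"
  using assms by (simp add: mat_zpow_def power_int_def mat_npow_hyperplane_scaling
      matrix_inv_hyperplane_scaling power_inverse)

lemma hyperplane_scaling_diag_diff:
  assumes "i \<noteq> j"
  shows "hyperplane_scaling w c $ i $ i - hyperplane_scaling w c $ j $ i = c"
  using assms by (simp add: hyperplane_scaling_nth)

lemma dvd_monom_one_imp_monom:
  fixes p :: "'a::idom poly"
  assumes "p dvd monom 1 N"
  shows "\<exists>u a. u dvd 1 \<and> p = monom u a"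
proof -
  obtain q where pq: "p * q = monom 1 N"
    using assms by (metis dvdE)
  then have p0: "p \<noteq> 0" and q0: "q \<noteq> 0"
    by auto
  define a where "a = order 0 p"
  define b where "b = order 0 q"
  obtain p' where p': "p = monom 1 a * p'"
    using monom_1_dvd_iff[OF p0] a_def by (auto elim: dvdE)
  obtain q' where q': "q = monom 1 b * q'"
    using monom_1_dvd_iff[OF q0] b_def by (auto elim: dvdE)
  have "p' \<noteq> 0" "q' \<noteq> 0"
    using p0 q0 p' q' by auto
  have "order 0 p = a + order 0 p'"
    using \<open>p' \<noteq> 0\<close> by (simp add: p' order_mult)
  then have "coeff p' 0 \<noteq> 0"
    using \<open>p' \<noteq> 0\<close> by (simp add: a_def order_root flip: poly_0_coeff_0)
  have "order 0 q = b + order 0 q'"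
    using \<open>q' \<noteq> 0\<close> by (simp add: q' order_mult)
  then have "coeff q' 0 \<noteq> 0"
    using \<open>q' \<noteq> 0\<close> by (simp add: b_def order_root flip: poly_0_coeff_0)
  have pq': "monom 1 (a + b) * (p' * q') = monom 1 N"
    using pq unfolding p' q' by (simp add: mult_monom ac_simps)
  have "coeff (monom 1 (a + b) * (p' * q')) (a + b) = coeff p' 0 * coeff q' 0"
    by (simp add: coeff_monom_mult coeff_mult_0)
  then have "N = a + b"
    using pq' \<open>coeff p' 0 \<noteq> 0\<close> \<open>coeff q' 0 \<noteq> 0\<close> by (auto simp: coeff_monom split: if_splits)
  then have "p' * q' = 1"
    using pq' by (metis mult_cancel_left mult.right_neutral monom_eq_0_iff one_neq_zero)
  then obtain u where "p' = [:u:]" "u dvd 1"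
    by (metis dvd_triv_left is_unit_poly_iff)
  then show ?thesis
    using p' by (auto simp: monom_altdef)
qed

lemma map_poly_of_int_diff:
  "map_poly (of_int :: int \<Rightarrow> 'a::comm_ring_1) (p - q) = map_poly of_int p - map_poly of_int q"
  by (rule poly_eqI) (simp add: coeff_map_poly)

lemma map_poly_of_int_mult:
  "map_poly (of_int :: int \<Rightarrow> 'a::comm_ring_1) (p * q) = map_poly of_int p * map_poly of_int q"
  by (rule poly_eqI) (simp add: coeff_map_poly coeff_mult of_int_sum)

lemma to_fract_power: "to_fract (x ^ n) = to_fract x ^ n"
  by (induction n) simp_all

definition omega :: complex where
  "omega = Complex (-1/2) (sqrt 3 / 2)"

lemma Re_omega [simp]: "Re omega = -1/2"
  by (simp add: omega_def)

lemma Im_omega [simp]: "Im omega = sqrt 3 / 2"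
  by (simp add: omega_def)

lemma omega_nonzero: "omega \<noteq> 0"
  by (simp add: complex_eq_iff)

lemma omega_squared: "omega ^ 2 = Complex (-1/2) (- sqrt 3 / 2)"
  by (simp add: complex_eq_iff power2_eq_square)

lemma omega_cubed: "omega ^ 3 = 1"
proof -
  have "omega ^ 3 = omega ^ 2 * omega"
    by (simp add: power_numeral_reduce power2_eq_square)
  then show ?thesis
    unfolding omega_squared by (simp add: complex_eq_iff)
qed

lemma cyclotomic3_omega: "1 + omega + omega ^ 2 = 0"
  unfolding omega_squared by (simp add: complex_eq_iff)

lemma omega_power_mod: "omega ^ k = omega ^ (k mod 3)"
  by (metis div_mult_mod_eq mult.commute omega_cubed power_add power_mult power_one mult_1)

lemma omega_power_eq_signed_powerD:
  assumes "u = 1 \<or> u = -1" and "omega ^ n = of_int u * omega ^ a"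
  shows "u = 1 \<and> n mod 3 = a mod 3"
proof -
  have "omega ^ (n mod 3) = of_int u * omega ^ (a mod 3)"
    using assms(2) omega_power_mod by metis
  moreover have "n mod 3 \<in> {0, 1, 2}" "a mod 3 \<in> {0, 1, 2}"
    by auto
  ultimately show ?thesis
    using assms(1) by (auto simp: omega_squared complex_eq_iff)
qed

lemma tt_nonzero: "tt \<noteq> 0"
  by (simp add: tt_def)

lemma one_plus_tt_nonzero: "1 + tt \<noteq> 0"
proof -
  have "1 + tt = to_fract [:1, 1:]"
    by (simp add: tt_def one_pCons flip: to_fract_1 to_fract_add)
  then show ?thesis
    by simp
qed

lemma cyclotomic3_tt_eq: "1 + tt + tt^2 = to_fract [:1, 1, 1:]"
  by (simp add: tt_def one_pCons power2_eq_square flip: to_fract_1 to_fract_add to_fract_mult)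

lemma cyclotomic3_tt_nonzero: "1 + tt + tt^2 \<noteq> 0"
  by (simp add: cyclotomic3_tt_eq)

definition qt_of_int_poly :: "int poly \<Rightarrow> qt" where
  "qt_of_int_poly p = to_fract (map_poly of_int p)"

lemma qt_of_int_poly_diff: "qt_of_int_poly (p - q) = qt_of_int_poly p - qt_of_int_poly q"
  by (simp add: qt_of_int_poly_def map_poly_of_int_diff)

lemma qt_of_int_poly_mult: "qt_of_int_poly (p * q) = qt_of_int_poly p * qt_of_int_poly q"
  by (simp add: qt_of_int_poly_def map_poly_of_int_mult)

lemma qt_of_int_poly_eq_iff: "qt_of_int_poly p = qt_of_int_poly q \<longleftrightarrow> p = q"
  by (auto simp: qt_of_int_poly_def poly_eq_iff coeff_map_poly)

lemma qt_of_int_poly_monom: "qt_of_int_poly (monom u n) = of_int u * tt ^ n"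
proof -
  have "monom (of_int u :: rat) n = [:of_int u:] * [:0, 1:] ^ n"
    by (simp add: monom_altdef)
  moreover have "to_fract (of_int u :: rat poly) = of_int u"
    by (induction u rule: int_induct[of _ 0]) simp_all
  moreover have "[:of_int u :: rat:] = of_int u"
    by (simp add: of_int_poly)
  ultimately show ?thesis
    by (simp add: qt_of_int_poly_def map_poly_monom tt_def to_fract_power)
qed

lemma qt_of_int_poly_cyclotomic3: "qt_of_int_poly [:1, 1, 1:] = 1 + tt + tt^2"
  by (simp add: qt_of_int_poly_def cyclotomic3_tt_eq map_poly_pCons)

lemma laurent_iff: "laurent x \<longleftrightarrow> (\<exists>p n. x = qt_of_int_poly p / tt ^ n)"
  by (simp add: laurent_def qt_of_int_poly_def)

lemma laurent_diff:
  assumes "laurent x" and "laurent y"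
  shows "laurent (x - y)"
proof -
  obtain p n where x: "x = qt_of_int_poly p / tt ^ n"
    using assms(1) laurent_iff by blast
  obtain q m where y: "y = qt_of_int_poly q / tt ^ m"
    using assms(2) laurent_iff by blast
  have "x - y = qt_of_int_poly (p * monom 1 m - q * monom 1 n) / tt ^ (n + m)"
    using tt_nonzero
    by (simp add: x y qt_of_int_poly_diff qt_of_int_poly_mult qt_of_int_poly_monom
        field_simps power_add)
  then show ?thesis
    unfolding laurent_iff by blast
qed

lemma laurent_unitE:
  assumes "c \<noteq> 0" and "laurent c" and "laurent (inverse c)"
  obtains u :: int and k :: int where "u = 1 \<or> u = -1" and "c = of_int u * tt powi k"
proof -
  obtain p n where p: "c = qt_of_int_poly p / tt ^ n"
    using assms(2) laurent_iff by blast
  obtain q m where q: "inverse c = qt_of_int_poly q / tt ^ m"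
    using assms(3) laurent_iff by blast
  have "qt_of_int_poly p * qt_of_int_poly q = tt ^ n * tt ^ m"
    using p q assms(1) tt_nonzero by (simp add: field_simps)
  then have "qt_of_int_poly (p * q) = qt_of_int_poly (monom 1 (n + m))"
    by (simp add: qt_of_int_poly_mult qt_of_int_poly_monom power_add)
  then have "p * q = monom 1 (n + m)"
    by (simp add: qt_of_int_poly_eq_iff)
  then obtain u a where u: "u dvd 1" and "p = monom u a"
    using dvd_monom_one_imp_monom by (metis dvdI)
  then have "c = of_int u * tt powi (int a - int n)"
    using tt_nonzero by (simp add: p qt_of_int_poly_monom power_int_diff)
  moreover have "u = 1 \<or> u = -1"
    using u by auto
  ultimately show ?thesis
    using that by blast
qed

lemma laurent_divide_cyclotomic3_imp_root:
  assumes "laurent (qt_of_int_poly p / (tt ^ n * (1 + tt + tt^2)))"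
  shows "poly (map_poly of_int p) omega = 0"
proof -
  obtain r m where "qt_of_int_poly p / (tt ^ n * (1 + tt + tt^2)) = qt_of_int_poly r / tt ^ m"
    using assms laurent_iff by blast
  moreover have "tt ^ n * (1 + tt + tt^2) \<noteq> 0"
    using tt_nonzero cyclotomic3_tt_nonzero by simp
  ultimately have "qt_of_int_poly p * tt ^ m = qt_of_int_poly r * (1 + tt + tt^2) * tt ^ n"
    using tt_nonzero by (simp add: frac_eq_eq ac_simps)
  then have "qt_of_int_poly (p * monom 1 m) = qt_of_int_poly (r * [:1, 1, 1:] * monom 1 n)"
    unfolding qt_of_int_poly_mult qt_of_int_poly_monom qt_of_int_poly_cyclotomic3 by simp
  then have "p * monom 1 m = r * [:1, 1, 1:] * monom 1 n"
    by (simp add: qt_of_int_poly_eq_iff)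
  then have "poly (map_poly of_int (p * monom 1 m)) omega
      = poly (map_poly of_int (r * [:1, 1, 1:] * monom 1 n)) omega"
    by (rule arg_cong)
  then have "poly (map_poly of_int p) omega * omega ^ m
      = poly (map_poly of_int r) omega * (1 + omega + omega ^ 2) * omega ^ n"
    unfolding map_poly_of_int_mult poly_mult
    by (simp add: map_poly_monom poly_monom map_poly_pCons power2_eq_square algebra_simps)
  then have "poly (map_poly of_int p) omega * omega ^ m = 0"
    by (simp only: cyclotomic3_omega mult_zero_left mult_zero_right)
  then show ?thesis
    using omega_nonzero by simp
qed

lemma laurent_divide_cyclotomic3D:
  assumes u: "u = 1 \<or> u = -1" and "laurent ((1 - of_int u * tt powi k) / (1 + tt + tt^2))"
  shows "u = 1 \<and> 3 dvd k"
proof -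
  define a n where "a = nat k" and "n = nat (- k)"
  have k: "k = int a - int n"
    by (simp add: a_def n_def)
  have "1 - of_int u * tt powi k = (tt ^ n - of_int u * tt ^ a) / tt ^ n"
    using tt_nonzero by (simp add: k power_int_diff diff_divide_distrib)
  then have "(1 - of_int u * tt powi k) / (1 + tt + tt^2)
      = qt_of_int_poly (monom 1 n - monom u a) / (tt ^ n * (1 + tt + tt^2))"
    by (simp add: qt_of_int_poly_diff qt_of_int_poly_monom divide_divide_eq_left)
  then have "poly (map_poly of_int (monom 1 n - monom u a)) omega = 0"
    using assms(2) laurent_divide_cyclotomic3_imp_root by metis
  then have "omega ^ n = of_int u * omega ^ a"
    by (simp add: map_poly_of_int_diff map_poly_monom poly_monom)
  then have "u = 1" and "n mod 3 = a mod 3"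
    using omega_power_eq_signed_powerD[OF u] by auto
  moreover have "int a mod 3 = int n mod 3"
    using \<open>n mod 3 = a mod 3\<close> by (metis of_nat_mod of_nat_numeral)
  ultimately show ?thesis
    by (simp add: k mod_eq_dvd_iff)
qed

lemma sum_vv: "sum (($) vv) UNIV = tt * (1 + tt + tt^2)"
  by (simp add: vv_def sum_3 algebra_simps power2_eq_square power3_eq_cube)

lemma sum_vv_nonzero: "sum (($) vv) UNIV \<noteq> 0"
  by (simp add: sum_vv tt_nonzero cyclotomic3_tt_nonzero)

lemma hyperplane_scaling_vv_nth:
  "hyperplane_scaling vv c $ i $ j
     = (if i = j then c else 0) + (1 - c) / (1 + tt + tt^2) * vector [1, tt, tt^2] $ j"
proof -
  have "vv $ j = tt * vector [1, tt, tt^2] $ j"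
    using exhaust_3[of j] by (auto simp: vv_def power2_eq_square power3_eq_cube)
  then show ?thesis
    by (simp add: hyperplane_scaling_nth sum_vv tt_nonzero)
qed

lemma burauDelta_eq_hyperplane_scaling: "burauDelta = hyperplane_scaling vv (tt^3)"
proof -
  have frac: "(1 - tt^3) / (1 + tt + tt^2) = 1 - tt"
    using cyclotomic3_tt_nonzero by (simp add: field_simps power2_eq_square power3_eq_cube)
  have "burauDelta $ i $ j = hyperplane_scaling vv (tt^3) $ i $ j" for i j
    unfolding hyperplane_scaling_vv_nth frac
    using exhaust_3[of i] exhaust_3[of j]
    by (auto simp: burauDelta_def burau1_def burau2_def matrix_matrix_mult_def sum_3
        algebra_simps power2_eq_square power3_eq_cube)
  then show ?thesis
    by (simp add: vec_eq_iff)
qed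

lemma phi_hyperplane_scaling: "phi (hyperplane_scaling vv c) = mat c"
proof -
  let ?M = "hyperplane_scaling vv c"
  define X where "X = (1 - c) / (1 + tt + tt^2)"
  have X: "X * (1 + tt + tt^2) = 1 - c"
    using cyclotomic3_tt_nonzero by (simp add: X_def)
  have M: "?M $ i $ j = (if i = j then c else 0) + X * vector [1, tt, tt^2] $ j" for i j
    by (simp add: hyperplane_scaling_vv_nth X_def)
  have e11: "?M $ 1 $ 1 * (1 + tt + tt^2) - 1 = c * (tt * (1 + tt))"
    unfolding M using X by (simp; algebra)
  have e12: "?M $ 1 $ 1 + ?M $ 1 $ 2 * (1 + tt) - 1 = 0"
    unfolding M using X by (simp; algebra)
  have e21: "?M $ 2 $ 1 * (1 + tt + tt^2) - 1 = - c"
    unfolding M using X by (simp; algebra)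
  have e22: "?M $ 2 $ 1 + ?M $ 2 $ 2 * (1 + tt) - 1 = c * tt"
    unfolding M using X by (simp; algebra)
  show ?thesis
    unfolding phi_def Let_def e11 e12 e21 e22
    using tt_nonzero one_plus_tt_nonzero
    by (simp add: vec_eq_iff forall_2 mat_def) (simp add: divide_simps)
qed

(* phi determines the upper left 2x2 block; the row sums and the invariance of vv give the rest. *)
lemma phi_inj_on: "inj_on phi {A. vv v* A = vv \<and> A *v ones3 = ones3}"
proof (rule inj_onI, clarsimp)
  fix A B :: "qt^3^3"
  assume vA: "vv v* A = vv" and oA: "A *v ones3 = ones3"
    and vB: "vv v* B = vv" and oB: "B *v ones3 = ones3" and AB: "phi A = phi B"
  have T: "tt * (1 + tt) \<noteq> 0"
    using tt_nonzero one_plus_tt_nonzero by simp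
  have q: "phi A $ i $ j = phi B $ i $ j" for i j
    using AB by simp
  note q11 = q[of 1 1, unfolded phi_def Let_def vector_2]
  note q12 = q[of 1 2, unfolded phi_def Let_def vector_2]
  note q21 = q[of 2 1, unfolded phi_def Let_def vector_2]
  note q22 = q[of 2 2, unfolded phi_def Let_def vector_2]
  have d11: "A $ 1 $ 1 = B $ 1 $ 1"
    using q11 T cyclotomic3_tt_nonzero by simp
  have d12: "A $ 1 $ 2 = B $ 1 $ 2"
    using q12 T one_plus_tt_nonzero d11 by simp
  have d21: "A $ 2 $ 1 = B $ 2 $ 1"
    using q21 T cyclotomic3_tt_nonzero one_plus_tt_nonzero tt_nonzero d11 by simp
  have d22: "A $ 2 $ 2 = B $ 2 $ 2"
    using q22 T one_plus_tt_nonzero tt_nonzero d11 d12 d21 by simp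
  have r: "(A *v ones3) $ i = (B *v ones3) $ i" for i
    using oA oB by simp
  note r1 = r[of 1, unfolded matrix_vector_mult_def sum_3 ones3_def, simplified]
  note r2 = r[of 2, unfolded matrix_vector_mult_def sum_3 ones3_def, simplified]
  have d13: "A $ 1 $ 3 = B $ 1 $ 3" using r1 d11 d12 by simp
  have d23: "A $ 2 $ 3 = B $ 2 $ 3" using r2 d21 d22 by simp
  have w: "(vv v* A) $ j = (vv v* B) $ j" for j
    using vA vB by simp
  note w1 = w[of 1, unfolded vector_matrix_mult_def sum_3 vv_def, simplified]
  note w2 = w[of 2, unfolded vector_matrix_mult_def sum_3 vv_def, simplified]
  note w3 = w[of 3, unfolded vector_matrix_mult_def sum_3 vv_def, simplified]
  have d31: "A $ 3 $ 1 = B $ 3 $ 1" using w1 d11 d21 tt_nonzero by simp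
  have d32: "A $ 3 $ 2 = B $ 3 $ 2" using w2 d12 d22 tt_nonzero by simp
  have d33: "A $ 3 $ 3 = B $ 3 $ 3" using w3 d13 d23 tt_nonzero by simp
  show "A = B"
    using d11 d12 d13 d21 d22 d23 d31 d32 d33 by (simp add: vec_eq_iff forall_3)
qed

lemma mat_zpow_burauDelta: "mat_zpow burauDelta k = hyperplane_scaling vv ((tt^3) powi k)"
  using sum_vv_nonzero tt_nonzero
  by (simp add: burauDelta_eq_hyperplane_scaling mat_zpow_hyperplane_scaling)

lemma eq_hyperplane_scaling_if_phi_eq_mat:
  assumes "A \<in> calB" and "phi A = mat c"
  shows "A = hyperplane_scaling vv c"
proof (rule inj_onD[OF phi_inj_on])
  show "phi A = phi (hyperplane_scaling vv c)"
    using assms(2) by (simp add: phi_hyperplane_scaling)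
  show "A \<in> {A. vv v* A = vv \<and> A *v ones3 = ones3}"
    using assms(1) by (simp add: calB_def)
  show "hyperplane_scaling vv c \<in> {A. vv v* A = vv \<and> A *v ones3 = ones3}"
    using sum_vv_nonzero
    by (simp add: ones3_def vector_matrix_mult_hyperplane_scaling hyperplane_scaling_mult_ones)
qed

lemma hyperplane_scaling_vv_in_GL3LD:
  assumes "c \<noteq> 0" and "hyperplane_scaling vv c \<in> GL3L"
  shows "\<exists>k. c = (tt^3) powi k"
proof -
  let ?M = "hyperplane_scaling vv"
  obtain B where LM: "laurent_mat (?M c)" and LB: "laurent_mat B"
    and "?M c ** B = mat 1" "B ** ?M c = mat 1"
    using assms(2) by (auto simp: GL3L_def)
  then have B: "B = ?M (inverse c)"
    using matrix_inv_eqI matrix_inv_hyperplane_scaling[OF sum_vv_nonzero assms(1)] by metis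
  have "laurent (B $ 1 $ 1 - B $ 2 $ 1)" "laurent (?M c $ 1 $ 1 - ?M c $ 2 $ 1)"
    using LB LM laurent_diff by (simp_all add: laurent_mat_def)
  then have "laurent (inverse c)" and "laurent c"
    by (simp_all add: B hyperplane_scaling_diag_diff)
  then obtain u k where u: "u = 1 \<or> u = -1" and c: "c = of_int u * tt powi k"
    using laurent_unitE assms(1) by metis
  have "laurent (?M c $ 2 $ 1)"
    using LM by (simp add: laurent_mat_def)
  then have "laurent ((1 - c) / (1 + tt + tt^2))"
    by (simp add: hyperplane_scaling_vv_nth)
  then have "u = 1" and "3 dvd k"
    using laurent_divide_cyclotomic3D[OF u] c by auto
  then show ?thesis
    using c by (auto simp: power_int_power elim!: dvdE)
qed

theorem corollary3p12:
  fixes A :: "qt^3^3"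
  assumes "A \<in> calB"
  shows "in_ker_phibar A \<longleftrightarrow> (\<exists>k::int. A = mat_zpow burauDelta k)"
proof
  assume "in_ker_phibar A"
  then obtain c where "c \<noteq> 0" and "phi A = mat c"
    by (auto simp: in_ker_phibar_def)
  moreover from this have A: "A = hyperplane_scaling vv c"
    using assms eq_hyperplane_scaling_if_phi_eq_mat by blast
  moreover have "A \<in> GL3L"
    using assms by (simp add: calB_def)
  ultimately obtain k where "c = (tt^3) powi k"
    using hyperplane_scaling_vv_in_GL3LD by blast
  then show "\<exists>k. A = mat_zpow burauDelta k"
    using A mat_zpow_burauDelta by auto
next
  assume "\<exists>k. A = mat_zpow burauDelta k"
  then obtain k where "phi A = mat ((tt^3) powi k)"
    by (auto simp: mat_zpow_burauDelta phi_hyperplane_scaling)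
  moreover have "(tt^3) powi k \<noteq> 0"
    using tt_nonzero by simp
  ultimately show "in_ker_phibar A"
    unfolding in_ker_phibar_def by blast
qed

end
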